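(* With $S$, $\lambda$ (growing fast enough), $\varphi(x)=x+1$ and $C_{RD}(\mathbb Z_S)$ as in the context, let $B^1_{RD}=\{g\circ\varphi-g:\ g\in C_{RD}(\mathbb Z_S)\}$. Then the first rapid decay cohomology group $H^1_{RD}(\mathbb Z_S,\varphi)=C_{RD}(\mathbb Z_S)/B^1_{RD}$ is isomorphic to $\mathbb C$, the isomorphism being induced by $f\mapsto\int_{\mathbb Z_S}f\,dx$.
   Context: Odometer $\mathbb Z_S=\varprojlim\mathbb Z/s_m\mathbb Z$ for a scale $(s_m)$ with $S=\mathrm{lcm}(s_m)$ infinite; $dx$ normalized Haar measure; $\varphi(x)=x+1$. Cocycles $\rho:\mathbb N\times\mathbb Z_S\to\mathbb C$ (satisfying $\rho(k+l,x)=\rho(k,x)+\rho(k,\varphi^l(x))$) are determined by $r=\rho(1,\cdot)$ via $\rho(k,x)=\sum_{i=0}^{k-1}r(\varphi^i(x))$; in the rapid decay setting the cocycles correspond to $r\in C_{RD}(\mathbb Z_S)$ and coboundaries to $r=g\circ\varphi-g$ with $g\in C_{RD}(\mathbb Z_S)$, so $H^1_{RD}$ is the quotient above. $\widetilde{\mathbb Z_S}=\{z\in\mathbb C:z^s=1\text{ for some } s\mid S\}$; $\chi_z(1)=z$; $\hat f_z=\int f\chi_{\bar z}dx$; $\lambda$ is a non-archimedean length function ($\lambda:\widetilde{\mathbb Z_S}\to[1,\infty)$, $\lambda(z)=1$ iff $z=1$, $\lambda(z_1z_2)\le\max\{\lambda(z_1),\lambda(z_2)\}$, $\{\lambda\le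 r\}$ finite) growing fast enough ($\lambda(z)\ge c\,\mathrm{ord}(z)^\alpha$ for some $c,\alpha>0$); $\|f\|_N=\sum_z|\hat f_z|\lambda(z)^N$; $C_{RD}(\mathbb Z_S)=\{f\in C(\mathbb Z_S):\|f\|_N<\infty\ \forall N\}$. *)

theory Defs
  imports "HOL-Analysis.Analysis"
begin

text \<open>A scale: positive integers s 0, s 1, ... with s m dividing s (m+1).
  The supernatural S = lcm(s m) is infinite iff the s m are unbounded.\<close>
definition is_scale :: "(nat \<Rightarrow> nat) \<Rightarrow> bool" where
  "is_scale s \<longleftrightarrow> (\<forall>m. 0 < s m \<and> s m dvd s (Suc m))"

definition infinite_lcm :: "(nat \<Rightarrow> nat) \<Rightarrow> bool" where
  "infinite_lcm s \<longleftrightarrow> (\<forall>n. \<exists>m. n < s m)"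

text \<open>The odometer Z_S = inverse limit of Z/(s m)Z, realised as compatible sequences
  of residues, as a subspace of (nat => int) with the product topology.\<close>
definition odometer :: "(nat \<Rightarrow> nat) \<Rightarrow> (nat \<Rightarrow> int) set" where
  "odometer s = {x. \<forall>m. 0 \<le> x m \<and> x m < int (s m) \<and> x m = x (Suc m) mod int (s m)}"

definition odo_of_int :: "(nat \<Rightarrow> nat) \<Rightarrow> int \<Rightarrow> (nat \<Rightarrow> int)" where
  "odo_of_int s k = (\<lambda>m. k mod int (s m))"

definition odo_phi :: "(nat \<Rightarrow> nat) \<Rightarrow> (nat \<Rightarrow> int) \<Rightarrow> (nat \<Rightarrow> int)" where
  "odo_phi s x = (\<lambda>m. (x m + 1) mod int (s m))"

text \<open>Integral with respect to the normalized Haar measure dx, for continuous f: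
  the limit of the averages over the cosets of the level-m subgroups
  (each cylinder {x. x m = k} has Haar measure 1 / s m).\<close>
definition haar_integral :: "(nat \<Rightarrow> nat) \<Rightarrow> ((nat \<Rightarrow> int) \<Rightarrow> complex) \<Rightarrow> complex" where
  "haar_integral s f = lim (\<lambda>m. (\<Sum>k<s m. f (odo_of_int s (int k))) / of_nat (s m))"

text \<open>The dual group: roots of unity of order dividing S.\<close>
definition dual_odometer :: "(nat \<Rightarrow> nat) \<Rightarrow> complex set" where
  "dual_odometer s = {z. \<exists>m. z ^ s m = 1}"

definition root_order :: "complex \<Rightarrow> nat" where
  "root_order z = (LEAST n. 0 < n \<and> z ^ n = 1)"

text \<open>The character chi_z with chi_z(1) = z.\<close>
definition odo_char :: "(nat \<Rightarrow> nat) \<Rightarrow> complex \<Rightarrow> (nat \<Rightarrow> int) \<Rightarrow> complex" where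
  "odo_char s z x = z ^ nat (x (LEAST m. z ^ s m = 1))"

definition fourier_coeff :: "(nat \<Rightarrow> nat) \<Rightarrow> ((nat \<Rightarrow> int) \<Rightarrow> complex) \<Rightarrow> complex \<Rightarrow> complex" where
  "fourier_coeff s f z = haar_integral s (\<lambda>x. f x * odo_char s (cnj z) x)"

definition good_length :: "(nat \<Rightarrow> nat) \<Rightarrow> (complex \<Rightarrow> real) \<Rightarrow> bool" where
  "good_length s lam \<longleftrightarrow>
     (\<forall>z\<in>dual_odometer s. 1 \<le> lam z) \<and>
     (\<forall>z\<in>dual_odometer s. lam z = 1 \<longleftrightarrow> z = 1) \<and>
     (\<forall>z1\<in>dual_odometer s. \<forall>z2\<in>dual_odometer s. lam (z1 * z2) \<le> max (lam z1) (lam z2)) \<and>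
     (\<forall>r. finite {z\<in>dual_odometer s. lam z \<le> r}) \<and>
     (\<exists>c \<alpha>. 0 < c \<and> 0 < \<alpha> \<and> (\<forall>z\<in>dual_odometer s. c * real (root_order z) powr \<alpha> \<le> lam z))"

definition C_RD :: "(nat \<Rightarrow> nat) \<Rightarrow> (complex \<Rightarrow> real) \<Rightarrow> ((nat \<Rightarrow> int) \<Rightarrow> complex) set" where
  "C_RD s lam = {f. continuous_on (odometer s) f \<and>
     (\<forall>N::nat. (\<lambda>z. norm (fourier_coeff s f z) * lam z ^ N) summable_on dual_odometer s)}"

definition B1_RD :: "(nat \<Rightarrow> nat) \<Rightarrow> (complex \<Rightarrow> real) \<Rightarrow> ((nat \<Rightarrow> int) \<Rightarrow> complex) set" where
  "B1_RD s lam = {f. \<exists>g\<in>C_RD s lam. \<forall>x\<in>odometer s. f x = g (odo_phi s x) - g x}"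

end

(*
  Averaging over the finite levels Z/s_m defines a translation-invariant integral for continuous
  functions, for which the characters are orthonormal. A continuous function is determined by its
  Fourier coefficients, and every absolutely summable family of coefficients is the transform of
  its Fourier series. Since chi_z(x + 1) = z chi_z(x), the coboundary g o phi - g has coefficients
  (z - 1) g^_z; in particular its integral (the coefficient at z = 1) vanishes. Conversely, if
  f^_1 = 0, the coefficients f^_z / (z - 1) define a solution g of g o phi - g = f, and they still
  decay rapidly: |z - 1| >= 1 / ord z, and the growth condition bounds ord z polynomially in lam z.
*)
theory Submission
  imports Defs
begin

lemma sum_lessThan_mult_mod:
  fixes F :: "nat \<Rightarrow> 'a::comm_semiring_1"
  assumes "0 < b"
  shows "(\<Sum>k<a * b. F (k mod b)) = of_nat a * (\<Sum>j<b. F j)"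
proof (induction a)
  case (Suc a)
  have "(\<Sum>k<Suc a * b. F (k mod b)) = (\<Sum>k\<in>{0..<a * b}. F (k mod b)) + (\<Sum>k\<in>{a * b..<a * b + b}. F (k mod b))"
    by (subst sum.atLeastLessThan_concat) (auto simp: atLeast0LessThan add.commute)
  also have "(\<Sum>k\<in>{a * b..<a * b + b}. F (k mod b)) = (\<Sum>j\<in>{0..<b}. F ((j + a * b) mod b))"
    using sum.shift_bounds_nat_ivl[of "\<lambda>k. F (k mod b)" 0 "a * b" b] by (simp add: add.commute)
  also have "\<dots> = (\<Sum>j<b. F j)" by (intro sum.cong) auto
  finally show ?case using Suc by (simp add: atLeast0LessThan algebra_simps)
qed simp

lemma power_eq_power_mod:
  fixes z :: "'a::monoid_mult"
  assumes "z ^ k = 1"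
  shows "z ^ n = z ^ (n mod k)"
proof -
  have "z ^ n = z ^ (k * (n div k) + n mod k)" by simp
  also have "\<dots> = z ^ (n mod k)" by (simp only: power_add power_mult assms power_one mult_1)
  finally show ?thesis .
qed

lemma summable_on_tail_small:
  fixes f :: "'a \<Rightarrow> real"
  assumes f: "f summable_on A" and "e > 0"
  obtains F where "finite F" "F \<subseteq> A"
    "\<And>Y. finite Y \<Longrightarrow> F \<subseteq> Y \<Longrightarrow> Y \<subseteq> A \<Longrightarrow> infsum f (A - Y) < e"
proof -
  have "\<forall>\<^sub>F Y in finite_subsets_at_top A. dist (sum f Y) (infsum f A) < e"
    using tendstoD[OF infsum_tendsto[OF f] \<open>e > 0\<close>] .
  then obtain F where F: "finite F" "F \<subseteq> A"
    and close: "\<And>Y. finite Y \<Longrightarrow> F \<subseteq> Y \<Longrightarrow> Y \<subseteq> A \<Longrightarrow> dist (sum f Y) (infsum f A) < e"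
    unfolding eventually_finite_subsets_at_top by metis
  have "infsum f (A - Y) < e" if Y: "finite Y" "F \<subseteq> Y" "Y \<subseteq> A" for Y
  proof -
    have "infsum f (A - Y) = infsum f A - sum f Y"
      using infsum_Diff[OF f summable_on_finite[OF Y(1)] Y(3)] Y(1) by simp
    then show ?thesis using close[OF Y] by (simp add: dist_real_def)
  qed
  then show ?thesis using that F by blast
qed

lemma exists_primitive_root_of_unity:
  assumes "0 < n"
  obtains \<omega> :: complex where "\<And>t. \<omega> ^ t = 1 \<longleftrightarrow> n dvd t"
proof
  fix t
  have "exp (2 * of_real pi * \<i> / of_nat n) ^ t = exp (of_nat t * (2 * of_real pi * \<i> / of_nat n))"
    by (simp flip: exp_of_nat_mult)
  also have "\<dots> = exp (2 * of_real pi * \<i> * of_nat t / of_nat n)"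
    by (simp add: ac_simps)
  finally have "exp (2 * of_real pi * \<i> / of_nat n) ^ t = exp (2 * of_real pi * \<i> * of_nat t / of_nat n)" .
  then show "exp (2 * of_real pi * \<i> / of_nat n) ^ t = 1 \<longleftrightarrow> n dvd t"
    using complex_root_unity_eq_1[of n t] assms by simp
qed

lemma dvd_add_diff_iff_mod_eq:
  fixes k n a :: nat
  assumes "a < n"
  shows "n dvd k + (n - a) \<longleftrightarrow> k mod n = a"
proof -
  define r where "r = k mod n"
  have "r < n" using assms unfolding r_def by simp
  have "n dvd k + (n - a) \<longleftrightarrow> (r + (n - a)) mod n = 0"
    unfolding r_def by (simp add: dvd_eq_mod_eq_0 mod_add_left_eq)
  moreover have "(r + (n - a)) mod n = (if a \<le> r then r - a else r + (n - a))"
  proof (cases "a \<le> r")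
    case True
    then have "r + (n - a) = (r - a) + n" using assms by simp
    then have "(r + (n - a)) mod n = (r - a + n) mod n" by (simp only:)
    also have "\<dots> = r - a" using \<open>r < n\<close> by simp
    finally show ?thesis using True by simp
  qed (use assms in simp)
  ultimately show ?thesis using assms by (auto simp: r_def)
qed

lemma sum_root_of_unity_powers_indicator:
  fixes \<omega> :: complex
  assumes \<omega>: "\<And>t. \<omega> ^ t = 1 \<longleftrightarrow> n dvd t" and "a < n"
  shows "(\<Sum>j<n. \<omega> ^ (j * (n - a)) * (\<omega> ^ j) ^ k) = (if k mod n = a then of_nat n else 0)"
proof -
  define v where "v = \<omega> ^ (k + (n - a))"
  have "\<omega> ^ (j * (n - a)) * (\<omega> ^ j) ^ k = v ^ j" for j
    by (simp add: v_def algebra_simps flip: power_add power_mult)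
  moreover have "v ^ n = 1"
    using \<omega>[of "(k + (n - a)) * n"] by (simp add: v_def flip: power_mult)
  moreover have "v = 1 \<longleftrightarrow> k mod n = a"
    using \<omega> dvd_add_diff_iff_mod_eq[OF \<open>a < n\<close>] by (simp add: v_def)
  ultimately show ?thesis by (simp add: sum_gp_strict)
qed

lemma sum_indicator_mod_eq:
  assumes "n dvd N" "a < n"
  shows "(\<Sum>k<N. if k mod n = a then of_nat n else 0) = (of_nat N :: 'a::comm_semiring_1)"
proof -
  obtain q where "N = q * n" using assms(1) by (metis dvd_def mult.commute)
  moreover have "(\<Sum>k<q * n. (\<lambda>j. if j = a then of_nat n else 0 :: 'a) (k mod n))
      = of_nat q * (\<Sum>j<n. (\<lambda>j. if j = a then of_nat n else 0 :: 'a) j)"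
    by (rule sum_lessThan_mult_mod) (use assms(2) in simp)
  ultimately show ?thesis using assms(2) by simp
qed

lemma norm_one_minus_power_le:
  fixes z :: "'a::real_normed_div_algebra"
  assumes "norm z = 1"
  shows "norm (1 - z ^ j) \<le> real j * norm (1 - z)"
proof (induction j)
  case (Suc j)
  have "1 - z ^ Suc j = (1 - z ^ j) + z ^ j * (1 - z)" by (simp add: algebra_simps power_commutes)
  then have "norm (1 - z ^ Suc j) \<le> norm (1 - z ^ j) + norm (z ^ j * (1 - z))"
    by (metis norm_triangle_ineq)
  also have "norm (z ^ j * (1 - z)) = norm (1 - z)" using assms by (simp add: norm_mult norm_power)
  finally show ?case using Suc by (simp add: algebra_simps)
qed simp

text \<open>The n numbers 1 - z^j, each of norm at most j |1 - z|, add up to n.\<close>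
lemma one_le_mult_norm_root_of_unity_minus_one:
  fixes z :: complex
  assumes "z ^ n = 1" "0 < n" "z \<noteq> 1"
  shows "1 \<le> real n * norm (z - 1)"
proof -
  have "norm z = 1" using assms power_eq_1_iff by blast
  have "(\<Sum>j<n. z ^ j) = 0" using assms by (simp add: sum_gp_strict)
  then have "real n = norm (\<Sum>j<n. 1 - z ^ j)" by (simp add: sum_subtractf)
  also have "\<dots> \<le> (\<Sum>j<n. real n * norm (1 - z))"
  proof (rule sum_norm_le)
    fix j assume "j \<in> {..<n}"
    then have "real j * norm (1 - z) \<le> real n * norm (1 - z)" by (simp add: mult_right_mono)
    then show "norm (1 - z ^ j) \<le> real n * norm (1 - z)"
      using norm_one_minus_power_le[OF \<open>norm z = 1\<close>, of j] by linarith
  qed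
  also have "\<dots> = real n * (real n * norm (z - 1))" by (simp add: norm_minus_commute)
  finally show ?thesis using assms(2) by (simp add: mult_le_cancel_left_pos)
qed

locale odometer_scale =
  fixes s :: "nat \<Rightarrow> nat"
  assumes is_scale: "is_scale s"
begin

lemma scale_pos: "0 < s m"
  using is_scale by (simp add: is_scale_def)

lemma scale_dvd: "m \<le> n \<Longrightarrow> s m dvd s n"
proof (induction n rule: dec_induct)
  case (step n)
  then show ?case using is_scale dvd_trans unfolding is_scale_def by blast
qed simp

lemma odometerD: "x \<in> odometer s \<Longrightarrow> 0 \<le> x m \<and> x m < int (s m) \<and> x m = x (Suc m) mod int (s m)"
  unfolding odometer_def by blast

lemma odometer_level_mod:
  assumes x: "x \<in> odometer s" and "i \<le> j"
  shows "x i = x j mod int (s i)"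
  using \<open>i \<le> j\<close>
proof (induction j rule: dec_induct)
  case base
  then show ?case using odometerD[OF x, of i] by simp
next
  case (step j)
  have "int (s i) dvd int (s j)" using scale_dvd step.hyps by simp
  then show ?case using step.IH odometerD[OF x, of j] by (simp add: mod_mod_cancel)
qed

lemma odometer_eq_below:
  "x \<in> odometer s \<Longrightarrow> y \<in> odometer s \<Longrightarrow> x M = y M \<Longrightarrow> i \<le> M \<Longrightarrow> x i = y i"
  using odometer_level_mod[of x i M] odometer_level_mod[of y i M] by simp

lemma odo_of_int_in_odometer: "odo_of_int s k \<in> odometer s"
  unfolding odometer_def odo_of_int_def
proof (intro CollectI allI conjI)
  fix m
  show "0 \<le> k mod int (s m)" "k mod int (s m) < int (s m)"
    using scale_pos[of m] by simp_all
  show "k mod int (s m) = k mod int (s (Suc m)) mod int (s m)"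
    using scale_dvd[of m "Suc m"] by (simp add: mod_mod_cancel)
qed

lemma odo_phi_odo_of_int: "odo_phi s (odo_of_int s k) = odo_of_int s (k + 1)"
  by (simp add: odo_phi_def odo_of_int_def fun_eq_iff mod_add_left_eq)

lemma odo_phi_in_odometer:
  assumes x: "x \<in> odometer s"
  shows "odo_phi s x \<in> odometer s"
  unfolding odometer_def odo_phi_def
proof (intro CollectI allI conjI)
  fix m
  show "0 \<le> (x m + 1) mod int (s m)" "(x m + 1) mod int (s m) < int (s m)"
    using scale_pos[of m] by simp_all
  have "int (s m) dvd int (s (Suc m))" using scale_dvd[of m "Suc m"] by simp
  then have "(x (Suc m) + 1) mod int (s (Suc m)) mod int (s m) = (x (Suc m) mod int (s m) + 1) mod int (s m)"
    by (simp add: mod_mod_cancel mod_add_left_eq)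
  then show "(x m + 1) mod int (s m) = (x (Suc m) + 1) mod int (s (Suc m)) mod int (s m)"
    using odometerD[OF x, of m] by simp
qed

subsection \<open>Topology\<close>

lemma continuous_on_coordinate_fun:
  fixes f :: "int \<Rightarrow> 'a::topological_space"
  shows "continuous_on UNIV (\<lambda>x::nat \<Rightarrow> int. f (x i))"
  using continuous_on_compose2[OF Topological_Spaces.continuous_on_discrete[of UNIV f] continuous_on_product_coordinates]
  by simp

lemma compact_odometer: "compact (odometer s)"
proof -
  define level_condition where "level_condition m =
      {x. 0 \<le> x m \<and> x m < int (s m) \<and> x m = x (Suc m) mod int (s m)}" for m
  have "closed (level_condition m)" for m
  proof -
    \<comment> \<open>written so that \<open>closed_Collect_eq\<close> applies with coordinate functions on both sides\<close>
    have eq: "level_condition m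
        = {x. (\<lambda>a. if 0 \<le> a \<and> a < int (s m) then 1 else 0) (x m) = (\<lambda>_. 1::int) (x m)}
          \<inter> {x. id (x m) = (\<lambda>a. a mod int (s m)) (x (Suc m))}"
      unfolding level_condition_def by (auto split: if_splits)
    show ?thesis
      unfolding eq by (intro closed_Int closed_Collect_eq continuous_on_coordinate_fun)
  qed
  moreover have "compactin (product_topology (\<lambda>_. euclidean) UNIV) (PiE UNIV (\<lambda>m. {0..<int (s m)}))"
    by (subst compactin_PiE) (simp add: finite_imp_compact)
  then have "compact (PiE UNIV (\<lambda>m. {0..<int (s m)}))"
    by (simp add: euclidean_product_topology)
  moreover have "odometer s = PiE UNIV (\<lambda>m. {0..<int (s m)}) \<inter> (\<Inter>m. level_condition m)"
  proof (intro set_eqI iffI)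
    fix x assume "x \<in> odometer s"
    then show "x \<in> PiE UNIV (\<lambda>m. {0..<int (s m)}) \<inter> (\<Inter>m. level_condition m)"
      unfolding level_condition_def using odometerD by (simp add: PiE_UNIV_domain Pi_iff)
  next
    fix x assume "x \<in> PiE UNIV (\<lambda>m. {0..<int (s m)}) \<inter> (\<Inter>m. level_condition m)"
    then show "x \<in> odometer s" unfolding level_condition_def odometer_def by blast
  qed
  ultimately show ?thesis
    by (metis compact_Int_closed closed_INT)
qed

lemma continuous_on_odo_phi: "continuous_on UNIV (odo_phi s)"
  unfolding odo_phi_def by (intro continuous_on_coordinatewise_then_product continuous_on_coordinate_fun)

lemma continuous_on_comp_odo_phi:
  "continuous_on (odometer s) g \<Longrightarrow> continuous_on (odometer s) (\<lambda>x. g (odo_phi s x))"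
  by (rule continuous_on_compose2[OF _ continuous_on_subset[OF continuous_on_odo_phi]])
    (auto simp: odo_phi_in_odometer)

lemma open_level_cylinder: "open {y::nat \<Rightarrow> int. y M = c}"
  using open_vimage[OF open_discrete[of "{c}"] continuous_on_product_coordinates[of M]]
  by (simp add: vimage_def)

lemma open_contains_level_cylinder:
  assumes "open U" "(x::nat \<Rightarrow> int) \<in> U"
  shows "\<exists>K. \<forall>y. (\<forall>i\<le>K. y i = x i) \<longrightarrow> y \<in> U"
proof -
  have "openin (product_topology (\<lambda>_. euclidean) UNIV) U"
    using assms(1) unfolding open_fun_def by auto
  from product_topology_open_contains_basis[OF this assms(2)]
  obtain X where X: "x \<in> (\<Pi>\<^sub>E i\<in>UNIV. X i)" "finite {i. X i \<noteq> UNIV}" "(\<Pi>\<^sub>E i\<in>UNIV. X i) \<subseteq> U"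
    by auto
  define K where "K = Max (insert 0 {i. X i \<noteq> UNIV})"
  have "y \<in> U" if y: "\<forall>i\<le>K. y i = x i" for y
  proof -
    have "y i \<in> X i" for i
    proof (cases "X i = UNIV")
      case False
      then have "i \<le> K" unfolding K_def using X(2) by (intro Max_ge) auto
      then show ?thesis using y X(1) by auto
    qed simp
    then show ?thesis using X(3) by auto
  qed
  then show ?thesis by blast
qed

definition level_continuous :: "((nat \<Rightarrow> int) \<Rightarrow> 'a::metric_space) \<Rightarrow> bool" where
  "level_continuous h \<longleftrightarrow>
     (\<forall>e>0. \<exists>M. \<forall>x\<in>odometer s. \<forall>y\<in>odometer s. x M = y M \<longrightarrow> dist (h x) (h y) < e)"

lemma level_continuousD:
  "level_continuous h \<Longrightarrow> e > 0 \<Longrightarrow>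
     \<exists>M. \<forall>x\<in>odometer s. \<forall>y\<in>odometer s. x M = y M \<longrightarrow> dist (h x) (h y) < e"
  by (simp add: level_continuous_def)

lemma continuous_on_imp_level_cylinder_close:
  assumes "continuous_on (odometer s) h" "x \<in> odometer s" "e > 0"
  shows "\<exists>K. \<forall>y\<in>odometer s. y K = x K \<longrightarrow> dist (h x) (h y) < e"
proof -
  obtain A where A: "open A" "x \<in> A" "\<forall>y\<in>odometer s. y \<in> A \<longrightarrow> h y \<in> ball (h x) e"
    using assms unfolding continuous_on_topological by (metis centre_in_ball open_ball)
  obtain K where K: "\<forall>y. (\<forall>i\<le>K. y i = x i) \<longrightarrow> y \<in> A"
    using open_contains_level_cylinder[OF A(1,2)] by blast
  have "dist (h x) (h y) < e" if "y \<in> odometer s" "y K = x K" for y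
  proof -
    have "y \<in> A" using K odometer_eq_below[OF that(1) assms(2) that(2)] by blast
    then show ?thesis using A(3) that(1) by simp
  qed
  then show ?thesis by blast
qed

lemma continuous_on_imp_level_continuous:
  assumes h: "continuous_on (odometer s) h"
  shows "level_continuous h"
  unfolding level_continuous_def
proof (intro allI impI)
  fix e :: real assume "e > 0"
  have "\<exists>K. \<forall>y\<in>odometer s. y K = x K \<longrightarrow> dist (h x) (h y) < e/2" if "x \<in> odometer s" for x
    using continuous_on_imp_level_cylinder_close[OF h that, of "e/2"] \<open>e > 0\<close> by simp
  then obtain K where K: "\<And>x y. x \<in> odometer s \<Longrightarrow> y \<in> odometer s \<Longrightarrow> y (K x) = x (K x) \<Longrightarrow> dist (h x) (h y) < e/2"
    by metis
  have cover: "odometer s \<subseteq> (\<Union>x\<in>odometer s. {y. y (K x) = x (K x)})" by blast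
  obtain C where C: "C \<subseteq> odometer s" "finite C" "odometer s \<subseteq> (\<Union>x\<in>C. {y. y (K x) = x (K x)})"
    using compactE_image[OF compact_odometer open_level_cylinder cover] by blast
  define M where "M = Max (K ` C)"
  have "dist (h y) (h z) < e" if yz: "y \<in> odometer s" "z \<in> odometer s" "y M = z M" for y z
  proof -
    obtain x where x: "x \<in> C" "y (K x) = x (K x)" using C(3) yz(1) by blast
    have "K x \<le> M" unfolding M_def using x(1) C(2) by simp
    then have "z (K x) = x (K x)" using odometer_eq_below[OF yz] x(2) by metis
    then have "dist (h x) (h y) < e/2" "dist (h x) (h z) < e/2"
      using K x C(1) yz by (meson subsetD)+
    then show ?thesis by (rule dist_triangle_half_r)
  qed
  then show "\<exists>M. \<forall>x\<in>odometer s. \<forall>y\<in>odometer s. x M = y M \<longrightarrow> dist (h x) (h y) < e" by blast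
qed

lemma level_continuous_imp_continuous_on:
  assumes "level_continuous h"
  shows "continuous_on (odometer s) h"
  unfolding continuous_on_topological
proof (intro ballI allI impI)
  fix x B assume x: "x \<in> odometer s" and B: "open B" "h x \<in> B"
  obtain e where e: "e > 0" "ball (h x) e \<subseteq> B" using B open_contains_ball by blast
  obtain M where M: "\<forall>x\<in>odometer s. \<forall>y\<in>odometer s. x M = y M \<longrightarrow> dist (h x) (h y) < e"
    using level_continuousD[OF assms e(1)] by blast
  have "h y \<in> B" if "y \<in> odometer s" "y M = x M" for y
    using M x that e(2) by auto
  then show "\<exists>A. open A \<and> x \<in> A \<and> (\<forall>y\<in>odometer s. y \<in> A \<longrightarrow> h y \<in> B)"
    by (intro exI[of _ "{y. y M = x M}"]) (auto intro: open_level_cylinder)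
qed

lemma continuous_on_iff_level_continuous:
  "continuous_on (odometer s) h \<longleftrightarrow> level_continuous h"
  using continuous_on_imp_level_continuous level_continuous_imp_continuous_on by blast

subsection \<open>Averages and the Haar integral\<close>

definition level_avg :: "nat \<Rightarrow> ((nat \<Rightarrow> int) \<Rightarrow> complex) \<Rightarrow> complex" where
  "level_avg m h = (\<Sum>k<s m. h (odo_of_int s (int k))) / of_nat (s m)"

lemma haar_integral_eq_lim: "haar_integral s h = lim (\<lambda>m. level_avg m h)"
  by (simp add: haar_integral_def level_avg_def)

lemma level_avg_add: "level_avg m (\<lambda>x. f x + g x) = level_avg m f + level_avg m g"
  by (simp add: level_avg_def sum.distrib add_divide_distrib)

lemma level_avg_diff: "level_avg m (\<lambda>x. f x - g x) = level_avg m f - level_avg m g"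
  by (simp add: level_avg_def sum_subtractf diff_divide_distrib)

lemma level_avg_cmult: "level_avg m (\<lambda>x. c * f x) = c * level_avg m f"
  by (simp add: level_avg_def sum_distrib_left)

lemma level_avg_sum: "level_avg m (\<lambda>x. \<Sum>i\<in>I. f i x) = (\<Sum>i\<in>I. level_avg m (f i))"
  by (simp add: level_avg_def sum.swap[of _ I] sum_divide_distrib)

lemma level_avg_const: "level_avg m (\<lambda>x. c) = c"
  using scale_pos[of m] by (simp add: level_avg_def)

lemma level_avg_cong: "(\<And>x. x \<in> odometer s \<Longrightarrow> f x = g x) \<Longrightarrow> level_avg m f = level_avg m g"
  by (simp add: level_avg_def odo_of_int_in_odometer)

lemma norm_level_avg_le:
  assumes "\<And>x. x \<in> odometer s \<Longrightarrow> norm (h x) \<le> B"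
  shows "norm (level_avg m h) \<le> B"
proof -
  have "norm (\<Sum>k<s m. h (odo_of_int s (int k))) \<le> of_nat (s m) * B"
    using sum_norm_le[of "{..<s m}" "\<lambda>k. h (odo_of_int s (int k))" "\<lambda>_. B"]
    by (simp add: assms odo_of_int_in_odometer)
  then show ?thesis
    using scale_pos[of m] by (simp add: level_avg_def norm_divide field_simps)
qed

text \<open>The level-M average of h is also the level-m average of the function k \<mapsto> h (k mod s M).\<close>
lemma level_avg_close:
  assumes h: "\<forall>x\<in>odometer s. \<forall>y\<in>odometer s. x M = y M \<longrightarrow> dist (h x) (h y) < e"
    and "M \<le> m"
  shows "dist (level_avg m h) (level_avg M h) \<le> e"
proof -
  obtain a where a: "s m = a * s M" using scale_dvd[OF \<open>M \<le> m\<close>] by (auto simp: dvd_def mult.commute)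
  have "(\<Sum>k<s m. h (odo_of_int s (int (k mod s M)))) = of_nat a * (\<Sum>j<s M. h (odo_of_int s (int j)))"
    unfolding a by (rule sum_lessThan_mult_mod[OF scale_pos])
  then have "level_avg M h = (\<Sum>k<s m. h (odo_of_int s (int (k mod s M)))) / of_nat (s m)"
    using scale_pos[of M] scale_pos[of m] a by (simp add: level_avg_def)
  then have diff: "level_avg m h - level_avg M h
      = (\<Sum>k<s m. h (odo_of_int s (int k)) - h (odo_of_int s (int (k mod s M)))) / of_nat (s m)"
    by (simp add: level_avg_def sum_subtractf diff_divide_distrib)
  have "odo_of_int s (int k) M = odo_of_int s (int (k mod s M)) M" for k
    by (simp add: odo_of_int_def zmod_int)
  then have "norm (h (odo_of_int s (int k)) - h (odo_of_int s (int (k mod s M)))) \<le> e" for k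
    using h odo_of_int_in_odometer by (metis dist_norm less_imp_le)
  then have "norm (\<Sum>k<s m. h (odo_of_int s (int k)) - h (odo_of_int s (int (k mod s M)))) \<le> (\<Sum>k<s m. e)"
    by (intro sum_norm_le)
  then show ?thesis
    using scale_pos[of m] by (simp add: dist_norm diff norm_divide field_simps)
qed

lemma level_avg_tendsto_haar_integral:
  assumes "continuous_on (odometer s) h"
  shows "(\<lambda>m. level_avg m h) \<longlonglongrightarrow> haar_integral s h"
proof -
  have h: "level_continuous h" using assms by (simp add: continuous_on_iff_level_continuous)
  have "Cauchy (\<lambda>m. level_avg m h)"
  proof (rule metric_CauchyI)
    fix e :: real assume "e > 0"
    then obtain M where M: "\<forall>x\<in>odometer s. \<forall>y\<in>odometer s. x M = y M \<longrightarrow> dist (h x) (h y) < e/3"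
      using level_continuousD[OF h, of "e/3"] by auto
    have "dist (level_avg m h) (level_avg n h) < e" if "M \<le> m" "M \<le> n" for m n
    proof -
      have "dist (level_avg m h) (level_avg M h) \<le> e/3" "dist (level_avg n h) (level_avg M h) \<le> e/3"
        using level_avg_close[OF M] that by auto
      then show ?thesis using dist_triangle2[of "level_avg m h" "level_avg n h" "level_avg M h"] \<open>e > 0\<close>
        by linarith
    qed
    then show "\<exists>M. \<forall>m\<ge>M. \<forall>n\<ge>M. dist (level_avg m h) (level_avg n h) < e" by blast
  qed
  then show ?thesis
    by (simp add: haar_integral_eq_lim Cauchy_convergent_iff convergent_LIMSEQ_iff)
qed

lemma haar_integral_eqI: "(\<lambda>m. level_avg m h) \<longlonglongrightarrow> L \<Longrightarrow> haar_integral s h = L"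
  by (simp add: haar_integral_eq_lim limI)

lemma haar_integral_cong:
  assumes "\<And>x. x \<in> odometer s \<Longrightarrow> f x = g x"
  shows "haar_integral s f = haar_integral s g"
  unfolding haar_integral_eq_lim using level_avg_cong[OF assms] by simp

lemma haar_integral_const: "haar_integral s (\<lambda>x. c) = c"
  by (rule haar_integral_eqI) (simp add: level_avg_const)

lemma haar_integral_add_cmult:
  assumes "continuous_on (odometer s) f" "continuous_on (odometer s) g"
  shows "haar_integral s (\<lambda>x. f x + c * g x) = haar_integral s f + c * haar_integral s g"
proof (rule haar_integral_eqI)
  have "(\<lambda>m. level_avg m f + c * level_avg m g) \<longlonglongrightarrow> haar_integral s f + c * haar_integral s g"
    by (intro tendsto_intros level_avg_tendsto_haar_integral assms)
  then show "(\<lambda>m. level_avg m (\<lambda>x. f x + c * g x)) \<longlonglongrightarrow> haar_integral s f + c * haar_integral s g"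
    by (simp add: level_avg_add level_avg_cmult)
qed

lemma haar_integral_cmult:
  "continuous_on (odometer s) f \<Longrightarrow> haar_integral s (\<lambda>x. c * f x) = c * haar_integral s f"
  using haar_integral_add_cmult[of "\<lambda>_. 0" f c] by (simp add: haar_integral_const)

lemma haar_integral_diff:
  assumes "continuous_on (odometer s) f" "continuous_on (odometer s) g"
  shows "haar_integral s (\<lambda>x. f x - g x) = haar_integral s f - haar_integral s g"
  using haar_integral_add_cmult[OF assms, of "-1"] by simp

text \<open>Shifting the level-m sample points by one changes their sum only by the two end terms,
  which agree modulo s m.\<close>
lemma haar_integral_comp_odo_phi:
  assumes "continuous_on (odometer s) g"
  shows "haar_integral s (\<lambda>x. g (odo_phi s x)) = haar_integral s g"
proof -
  define G where "G k = g (odo_of_int s (int k))" for k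
  have shift: "level_avg m (\<lambda>x. g (odo_phi s x)) - level_avg m g = (G (s m) - G 0) / of_nat (s m)" for m
  proof -
    have "level_avg m (\<lambda>x. g (odo_phi s x)) - level_avg m g = (\<Sum>k<s m. G (Suc k) - G k) / of_nat (s m)"
      by (simp add: level_avg_def G_def odo_phi_odo_of_int sum_subtractf diff_divide_distrib add.commute)
    then show ?thesis by (simp add: sum_lessThan_telescope)
  qed
  have "(\<lambda>m. (G (s m) - G 0) / of_nat (s m)) \<longlonglongrightarrow> 0"
  proof (rule LIMSEQ_I)
    fix e :: real assume "e > 0"
    then obtain M where M: "\<forall>x\<in>odometer s. \<forall>y\<in>odometer s. x M = y M \<longrightarrow> dist (g x) (g y) < e"
      using level_continuousD assms continuous_on_iff_level_continuous by metis
    have "norm ((G (s m) - G 0) / of_nat (s m) - 0) < e" if "M \<le> m" for m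
    proof -
      have "odo_of_int s (int (s m)) M = odo_of_int s 0 M"
        using scale_dvd[OF that] by (simp add: odo_of_int_def)
      then have "norm (G (s m) - G 0) < e"
        using M odo_of_int_in_odometer by (simp add: G_def dist_norm)
      moreover have "norm (G (s m) - G 0) / real (s m) \<le> norm (G (s m) - G 0)"
        using scale_pos[of m] by (simp add: divide_le_eq mult_le_cancel_left1)
      ultimately show ?thesis by (simp add: norm_divide)
    qed
    then show "\<exists>M. \<forall>m\<ge>M. norm ((G (s m) - G 0) / of_nat (s m) - 0) < e" by blast
  qed
  then have "(\<lambda>m. level_avg m g + (level_avg m (\<lambda>x. g (odo_phi s x)) - level_avg m g)) \<longlonglongrightarrow> haar_integral s g + 0"
    unfolding shift by (intro tendsto_add level_avg_tendsto_haar_integral assms)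
  then show ?thesis by (intro haar_integral_eqI) simp
qed

lemma haar_integral_coboundary:
  "continuous_on (odometer s) g \<Longrightarrow> haar_integral s (\<lambda>x. g (odo_phi s x) - g x) = 0"
  by (simp add: haar_integral_diff haar_integral_comp_odo_phi continuous_on_comp_odo_phi)

subsection \<open>Characters\<close>

definition char_level :: "complex \<Rightarrow> nat" where
  "char_level z = (LEAST m. z ^ s m = 1)"

lemma odo_char_char_level: "odo_char s z x = z ^ nat (x (char_level z))"
  by (simp add: odo_char_def char_level_def)

lemma power_char_level: "z \<in> dual_odometer s \<Longrightarrow> z ^ s (char_level z) = 1"
  unfolding char_level_def dual_odometer_def by (rule LeastI_ex) simp

lemma char_level_le: "z ^ s m = 1 \<Longrightarrow> char_level z \<le> m"
  unfolding char_level_def by (rule Least_le)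

lemma power_scale_mono: "z ^ s m = 1 \<Longrightarrow> m \<le> n \<Longrightarrow> z ^ s n = (1::complex)"
  using scale_dvd by (metis dvd_def power_mult power_one)

lemma power_char_level_le: "z \<in> dual_odometer s \<Longrightarrow> char_level z \<le> m \<Longrightarrow> z ^ s m = 1"
  using power_scale_mono power_char_level by blast

lemma odo_char_eq:
  assumes x: "x \<in> odometer s" and z: "z ^ s m = 1"
  shows "odo_char s z x = z ^ nat (x m)"
proof -
  define l where "l = char_level z"
  have "z ^ s l = 1" unfolding l_def using power_char_level z by (auto simp: dual_odometer_def)
  moreover have "nat (x l) = nat (x m) mod s l"
    using odometer_level_mod[OF x char_level_le[OF z]] odometerD[OF x, of m] scale_pos[of l]
    by (simp add: l_def nat_mod_distrib)
  ultimately show ?thesis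
    using power_eq_power_mod by (metis odo_char_char_level l_def)
qed

lemma odo_char_odo_of_int:
  assumes "z \<in> dual_odometer s"
  shows "odo_char s z (odo_of_int s (int k)) = z ^ k"
proof -
  have "odo_char s z (odo_of_int s (int k)) = z ^ (k mod s (char_level z))"
    by (simp add: odo_char_char_level odo_of_int_def flip: zmod_int)
  then show ?thesis using power_eq_power_mod[OF power_char_level[OF assms]] by simp
qed

lemma odo_char_odo_phi:
  assumes x: "x \<in> odometer s" and z: "z \<in> dual_odometer s"
  shows "odo_char s z (odo_phi s x) = z * odo_char s z x"
proof -
  define l where "l = char_level z"
  have zl: "z ^ s l = 1" unfolding l_def using power_char_level[OF z] .
  have "nat (odo_phi s x l) = (nat (x l) + 1) mod s l"
    using odometerD[OF x, of l] scale_pos[of l] by (simp add: odo_phi_def nat_mod_distrib nat_add_distrib)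
  then have "odo_char s z (odo_phi s x) = z ^ (nat (x l) + 1)"
    using power_eq_power_mod[OF zl] by (simp add: odo_char_char_level l_def)
  then show ?thesis by (simp add: odo_char_char_level l_def)
qed

lemma odo_char_one: "odo_char s 1 x = 1"
  by (simp add: odo_char_def)

lemma one_in_dual_odometer: "1 \<in> dual_odometer s"
  by (simp add: dual_odometer_def)

lemma cnj_in_dual_odometer: "z \<in> dual_odometer s \<Longrightarrow> cnj z \<in> dual_odometer s"
  by (simp add: dual_odometer_def flip: complex_cnj_power)

lemma norm_dual_odometer:
  assumes "z \<in> dual_odometer s"
  shows "norm z = 1"
proof -
  obtain m where "z ^ s m = 1" using assms by (auto simp: dual_odometer_def)
  then show ?thesis using power_eq_1_iff[of z "s m"] scale_pos[of m] by auto
qed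

lemma cnj_mult_dual_odometer: "z \<in> dual_odometer s \<Longrightarrow> cnj z * z = 1"
  using norm_dual_odometer complex_norm_square[of z] by (simp add: mult.commute)

lemma norm_odo_char: "z \<in> dual_odometer s \<Longrightarrow> norm (odo_char s z x) = 1"
  by (simp add: odo_char_char_level norm_power norm_dual_odometer)

lemma continuous_on_odo_char: "continuous_on A (odo_char s z)"
  unfolding odo_char_char_level
  by (rule continuous_on_subset[OF continuous_on_coordinate_fun subset_UNIV])

lemma level_avg_odo_char_orthogonal:
  assumes z: "z \<in> dual_odometer s" and w: "w \<in> dual_odometer s"
    and "char_level z \<le> m" "char_level w \<le> m"
  shows "level_avg m (\<lambda>x. odo_char s z x * odo_char s (cnj w) x) = (if z = w then 1 else 0)"
proof -
  define u where "u = z * cnj w"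
  have "u ^ s m = 1"
    using power_char_level_le[OF z] power_char_level_le[OF w] assms(3,4)
    by (simp add: u_def power_mult_distrib flip: complex_cnj_power)
  moreover have "u = 1 \<longleftrightarrow> z = w"
    using cnj_mult_dual_odometer[OF w] unfolding u_def by (metis mult.assoc mult.commute mult_1 mult_1_right)
  moreover have "level_avg m (\<lambda>x. odo_char s z x * odo_char s (cnj w) x) = (\<Sum>k<s m. u ^ k) / of_nat (s m)"
    by (simp add: level_avg_def odo_char_odo_of_int z cnj_in_dual_odometer[OF w] u_def power_mult_distrib)
  ultimately show ?thesis
    using scale_pos[of m] by (auto simp: sum_gp_strict)
qed

subsection \<open>Fourier coefficients\<close>

lemma continuous_on_mult_odo_char:
  "continuous_on (odometer s) h \<Longrightarrow> continuous_on (odometer s) (\<lambda>x. h x * odo_char s z x)"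
  by (intro continuous_on_mult continuous_on_odo_char)

lemma level_avg_tendsto_fourier_coeff:
  "continuous_on (odometer s) h \<Longrightarrow>
     (\<lambda>m. level_avg m (\<lambda>x. h x * odo_char s (cnj z) x)) \<longlonglongrightarrow> fourier_coeff s h z"
  unfolding fourier_coeff_def by (intro level_avg_tendsto_haar_integral continuous_on_mult_odo_char)

lemma fourier_coeff_one: "fourier_coeff s f 1 = haar_integral s f"
  by (simp add: fourier_coeff_def odo_char_one)

lemma fourier_coeff_const:
  assumes z: "z \<in> dual_odometer s"
  shows "fourier_coeff s (\<lambda>x. c) z = (if z = 1 then c else 0)"
  unfolding fourier_coeff_def
proof (rule haar_integral_eqI, rule tendsto_eventually, unfold eventually_sequentially, intro exI allI impI)
  fix m assume "char_level z \<le> m"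
  moreover have "char_level 1 \<le> m" using char_level_le[of 1 0] by simp
  ultimately have "level_avg m (\<lambda>x. odo_char s 1 x * odo_char s (cnj z) x) = (if 1 = z then 1 else 0)"
    using z by (intro level_avg_odo_char_orthogonal one_in_dual_odometer)
  then show "level_avg m (\<lambda>x. c * odo_char s (cnj z) x) = (if z = 1 then c else 0)"
    by (auto simp: level_avg_cmult odo_char_one)
qed

lemma fourier_coeff_comp_odo_phi:
  assumes g: "continuous_on (odometer s) g" and z: "z \<in> dual_odometer s"
  shows "fourier_coeff s (\<lambda>x. g (odo_phi s x)) z = z * fourier_coeff s g z"
proof -
  have "g (odo_phi s x) * odo_char s (cnj z) x = z * (g (odo_phi s x) * odo_char s (cnj z) (odo_phi s x))"
    if "x \<in> odometer s" for x
    using odo_char_odo_phi[OF that cnj_in_dual_odometer[OF z]] cnj_mult_dual_odometer[OF z]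
    by (simp add: mult.commute mult.left_commute)
  then have "fourier_coeff s (\<lambda>x. g (odo_phi s x)) z
      = haar_integral s (\<lambda>x. z * (g (odo_phi s x) * odo_char s (cnj z) (odo_phi s x)))"
    unfolding fourier_coeff_def by (rule haar_integral_cong)
  also have "\<dots> = z * haar_integral s (\<lambda>x. g (odo_phi s x) * odo_char s (cnj z) (odo_phi s x))"
    by (intro haar_integral_cmult continuous_on_comp_odo_phi[where g = "\<lambda>x. g x * odo_char s (cnj z) x"]
        continuous_on_mult_odo_char g)
  also have "\<dots> = z * haar_integral s (\<lambda>x. g x * odo_char s (cnj z) x)"
    using haar_integral_comp_odo_phi[OF continuous_on_mult_odo_char[OF g]] by simp
  finally show ?thesis by (simp add: fourier_coeff_def)
qed

lemma fourier_coeff_diff: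
  assumes "continuous_on (odometer s) f" "continuous_on (odometer s) g"
  shows "fourier_coeff s (\<lambda>x. f x - g x) z = fourier_coeff s f z - fourier_coeff s g z"
  unfolding fourier_coeff_def left_diff_distrib
  by (intro haar_integral_diff continuous_on_mult_odo_char assms)

lemma fourier_coeff_coboundary:
  assumes g: "continuous_on (odometer s) g" and z: "z \<in> dual_odometer s"
  shows "fourier_coeff s (\<lambda>x. g (odo_phi s x) - g x) z = (z - 1) * fourier_coeff s g z"
  using fourier_coeff_diff[OF continuous_on_comp_odo_phi[OF g] g]
  by (simp add: fourier_coeff_comp_odo_phi[OF g z] left_diff_distrib)

subsection \<open>Fourier series\<close>

definition fourier_series :: "(complex \<Rightarrow> complex) \<Rightarrow> (nat \<Rightarrow> int) \<Rightarrow> complex" where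
  "fourier_series c x = infsum (\<lambda>z. c z * odo_char s z x) (dual_odometer s)"

lemma abs_summable_on_fourier_terms:
  assumes "(\<lambda>z. norm (c z)) summable_on dual_odometer s" "A \<subseteq> dual_odometer s"
  shows "(\<lambda>z. norm (c z * odo_char s z x)) summable_on A"
proof -
  have "norm (c z * odo_char s z x) = norm (c z)" if "z \<in> A" for z
    using norm_odo_char that assms(2) by (auto simp: norm_mult)
  then have "(\<lambda>z. norm (c z * odo_char s z x)) summable_on A \<longleftrightarrow> (\<lambda>z. norm (c z)) summable_on A"
    by (rule summable_on_cong)
  then show ?thesis using summable_on_subset[OF assms] by blast
qed

lemma fourier_series_split:
  assumes c: "(\<lambda>z. norm (c z)) summable_on dual_odometer s"
    and Y: "finite Y" "Y \<subseteq> dual_odometer s"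
  shows "fourier_series c x
      = (\<Sum>z\<in>Y. c z * odo_char s z x) + infsum (\<lambda>z. c z * odo_char s z x) (dual_odometer s - Y)"
proof -
  have "(\<lambda>z. c z * odo_char s z x) summable_on (dual_odometer s - Y)"
    using abs_summable_summable[OF abs_summable_on_fourier_terms[OF c]] by blast
  then have "infsum (\<lambda>z. c z * odo_char s z x) (Y \<union> (dual_odometer s - Y))
      = infsum (\<lambda>z. c z * odo_char s z x) Y + infsum (\<lambda>z. c z * odo_char s z x) (dual_odometer s - Y)"
    using Y(1) by (intro infsum_Un_disjoint) auto
  then show ?thesis
    unfolding fourier_series_def using Y by (simp add: Un_absorb1)
qed

lemma norm_fourier_series_tail_le:
  assumes c: "(\<lambda>z. norm (c z)) summable_on dual_odometer s"
  shows "norm (infsum (\<lambda>z. c z * odo_char s z x) (dual_odometer s - Y))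
      \<le> infsum (\<lambda>z. norm (c z)) (dual_odometer s - Y)"
proof -
  have "norm (infsum (\<lambda>z. c z * odo_char s z x) (dual_odometer s - Y))
      \<le> infsum (\<lambda>z. norm (c z * odo_char s z x)) (dual_odometer s - Y)"
    by (rule norm_infsum_bound[OF abs_summable_on_fourier_terms[OF c]]) auto
  also have "\<dots> = infsum (\<lambda>z. norm (c z)) (dual_odometer s - Y)"
    by (intro infsum_cong) (simp add: norm_mult norm_odo_char)
  finally show ?thesis .
qed

lemma continuous_on_fourier_series:
  assumes c: "(\<lambda>z. norm (c z)) summable_on dual_odometer s"
  shows "continuous_on (odometer s) (fourier_series c)"
  unfolding continuous_on_iff_level_continuous level_continuous_def
proof (intro allI impI)
  fix e :: real assume "e > 0"
  then obtain F where F: "finite F" "F \<subseteq> dual_odometer s"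
    and tail: "infsum (\<lambda>z. norm (c z)) (dual_odometer s - F) < e/2"
    using summable_on_tail_small[OF c, of "e/2"] by (metis half_gt_zero order_refl)
  define M where "M = Max (insert 0 (char_level ` F))"
  have "dist (fourier_series c x) (fourier_series c y) < e"
    if xy: "x \<in> odometer s" "y \<in> odometer s" "x M = y M" for x y
  proof -
    have zM: "z ^ s M = 1" if "z \<in> F" for z
      using power_char_level_le[of z M] F that by (auto simp: M_def)
    have "(\<Sum>z\<in>F. c z * odo_char s z x) = (\<Sum>z\<in>F. c z * odo_char s z y)"
      using odo_char_eq[OF xy(1) zM] odo_char_eq[OF xy(2) zM] xy(3) by (intro sum.cong) auto
    then have "fourier_series c x - fourier_series c y
        = infsum (\<lambda>z. c z * odo_char s z x) (dual_odometer s - F) - infsum (\<lambda>z. c z * odo_char s z y) (dual_odometer s - F)"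
      using fourier_series_split[OF c F] by simp
    then show ?thesis
      using norm_fourier_series_tail_le[OF c, of x F] norm_fourier_series_tail_le[OF c, of y F] tail
        norm_triangle_ineq4[of "infsum (\<lambda>z. c z * odo_char s z x) (dual_odometer s - F)"
          "infsum (\<lambda>z. c z * odo_char s z y) (dual_odometer s - F)"]
      by (simp add: dist_norm)
  qed
  then show "\<exists>M. \<forall>x\<in>odometer s. \<forall>y\<in>odometer s. x M = y M \<longrightarrow> dist (fourier_series c x) (fourier_series c y) < e"
    by blast
qed

text \<open>Once the level exceeds the levels of finitely many characters, orthogonality picks out their
  coefficients exactly; the remaining tail is uniformly small.\<close>
lemma fourier_coeff_fourier_series:
  assumes c: "(\<lambda>z. norm (c z)) summable_on dual_odometer s" and w: "w \<in> dual_odometer s"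
  shows "fourier_coeff s (fourier_series c) w = c w"
  unfolding fourier_coeff_def
proof (rule haar_integral_eqI, rule LIMSEQ_I)
  fix r :: real assume "r > 0"
  then obtain F where F: "finite F" "F \<subseteq> dual_odometer s"
    and small: "\<And>Y. finite Y \<Longrightarrow> F \<subseteq> Y \<Longrightarrow> Y \<subseteq> dual_odometer s \<Longrightarrow>
      infsum (\<lambda>z. norm (c z)) (dual_odometer s - Y) < r"
    using summable_on_tail_small[OF c] by blast
  define Y where "Y = insert w F"
  have Y: "finite Y" "Y \<subseteq> dual_odometer s" "w \<in> Y" using F w by (auto simp: Y_def)
  have tail: "infsum (\<lambda>z. norm (c z)) (dual_odometer s - Y) < r"
    using small Y by (auto simp: Y_def)
  define T where "T x = infsum (\<lambda>z. c z * odo_char s z x) (dual_odometer s - Y)" for x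
  have "norm (level_avg m (\<lambda>x. fourier_series c x * odo_char s (cnj w) x) - c w) < r"
    if m: "Max (char_level ` Y) \<le> m" for m
  proof -
    have levels: "char_level z \<le> m" if "z \<in> Y" for z
      using m Y(1) that by (meson Max_ge finite_imageI image_eqI order_trans)
    have "level_avg m (\<lambda>x. fourier_series c x * odo_char s (cnj w) x)
        = level_avg m (\<lambda>x. (\<Sum>z\<in>Y. c z * (odo_char s z x * odo_char s (cnj w) x)) + T x * odo_char s (cnj w) x)"
      by (simp add: fourier_series_split[OF c Y(1,2)] T_def distrib_right sum_distrib_right mult.assoc)
    also have "\<dots> = (\<Sum>z\<in>Y. c z * level_avg m (\<lambda>x. odo_char s z x * odo_char s (cnj w) x))
        + level_avg m (\<lambda>x. T x * odo_char s (cnj w) x)"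
      by (simp add: level_avg_add level_avg_sum level_avg_cmult)
    also have "(\<Sum>z\<in>Y. c z * level_avg m (\<lambda>x. odo_char s z x * odo_char s (cnj w) x)) = c w"
      using Y levels w by (simp add: level_avg_odo_char_orthogonal subset_iff if_distrib sum.delta cong: if_cong)
    finally have "level_avg m (\<lambda>x. fourier_series c x * odo_char s (cnj w) x) - c w
        = level_avg m (\<lambda>x. T x * odo_char s (cnj w) x)" by simp
    moreover have "norm (level_avg m (\<lambda>x. T x * odo_char s (cnj w) x)) \<le> infsum (\<lambda>z. norm (c z)) (dual_odometer s - Y)"
      using norm_fourier_series_tail_le[OF c] cnj_in_dual_odometer[OF w]
      by (intro norm_level_avg_le) (simp add: T_def norm_mult norm_odo_char)
    ultimately show ?thesis using tail by simp
  qed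
  then show "\<exists>M. \<forall>m\<ge>M. norm (level_avg m (\<lambda>x. fourier_series c x * odo_char s (cnj w) x) - c w) < r"
    by blast
qed

subsection \<open>Uniqueness of Fourier coefficients\<close>

lemma sum_odo_char_cylinder:
  assumes \<omega>: "\<And>t. \<omega> ^ t = 1 \<longleftrightarrow> s M dvd t" and x: "x \<in> odometer s" and "a < s M"
  shows "(\<Sum>j<s M. \<omega> ^ (j * (s M - a)) * odo_char s (\<omega> ^ j) x) = (if x M = int a then of_nat (s M) else 0)"
proof -
  have "odo_char s (\<omega> ^ j) x = (\<omega> ^ j) ^ nat (x M)" for j
    using \<omega>[of "j * s M"] by (intro odo_char_eq[OF x]) (simp add: power_mult[symmetric])
  moreover have "nat (x M) mod s M = a \<longleftrightarrow> x M = int a"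
    using odometerD[OF x, of M] by auto
  ultimately show ?thesis
    using sum_root_of_unity_powers_indicator[OF \<omega> \<open>a < s M\<close>, of "nat (x M)"] by simp
qed

lemma level_avg_cylinder_eq_sum_odo_char:
  assumes \<omega>: "\<And>t. \<omega> ^ t = 1 \<longleftrightarrow> s M dvd t" and a: "a < s M"
  shows "level_avg m (\<lambda>x. h x * (if x M = int a then of_nat (s M) else 0))
      = (\<Sum>j<s M. \<omega> ^ (j * (s M - a)) * level_avg m (\<lambda>x. h x * odo_char s (\<omega> ^ j) x))"
proof -
  have "level_avg m (\<lambda>x. h x * (if x M = int a then of_nat (s M) else 0))
      = level_avg m (\<lambda>x. \<Sum>j<s M. \<omega> ^ (j * (s M - a)) * (h x * odo_char s (\<omega> ^ j) x))"
  proof (rule level_avg_cong)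
    fix x assume x: "x \<in> odometer s"
    have "(\<Sum>j<s M. \<omega> ^ (j * (s M - a)) * (h x * odo_char s (\<omega> ^ j) x))
        = h x * (\<Sum>j<s M. \<omega> ^ (j * (s M - a)) * odo_char s (\<omega> ^ j) x)"
      by (simp add: sum_distrib_left mult_ac)
    then show "h x * (if x M = int a then of_nat (s M) else 0)
        = (\<Sum>j<s M. \<omega> ^ (j * (s M - a)) * (h x * odo_char s (\<omega> ^ j) x))"
      using sum_odo_char_cylinder[OF \<omega> x a] by simp
  qed
  then show ?thesis by (simp add: level_avg_sum level_avg_cmult)
qed

lemma level_avg_cylinder_close:
  assumes h: "\<forall>x\<in>odometer s. \<forall>y\<in>odometer s. x M = y M \<longrightarrow> dist (h x) (h y) < e"
    and x0: "x0 \<in> odometer s" and "M \<le> m"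
  shows "norm (level_avg m (\<lambda>x. h x * (if x M = x0 M then of_nat (s M) else 0)) - h x0) \<le> e"
proof -
  define a where "a = nat (x0 M)"
  have a: "a < s M" "x0 M = int a" using odometerD[OF x0, of M] by (auto simp: a_def)
  have level: "odo_of_int s (int k) M = x0 M \<longleftrightarrow> k mod s M = a" for k
    using a(2) by (simp add: odo_of_int_def flip: zmod_int)
  have "M \<le> m" by fact
  define ind :: "(nat \<Rightarrow> int) \<Rightarrow> complex" where "ind x = (if x M = x0 M then of_nat (s M) else 0)" for x
  have "level_avg m ind = 1"
    using sum_indicator_mod_eq[OF scale_dvd[OF \<open>M \<le> m\<close>] a(1), where 'a=complex] scale_pos[of m]
    by (simp add: level_avg_def ind_def level)
  then have diff: "level_avg m (\<lambda>x. h x * ind x) - h x0 = level_avg m (\<lambda>x. (h x - h x0) * ind x)"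
    by (simp add: left_diff_distrib level_avg_diff level_avg_cmult)
  have "norm (\<Sum>k<s m. (h (odo_of_int s (int k)) - h x0) * ind (odo_of_int s (int k)))
      \<le> (\<Sum>k<s m. e * (if k mod s M = a then of_nat (s M) else 0))"
  proof (rule sum_norm_le)
    fix k
    have "norm (h (odo_of_int s (int k)) - h x0) \<le> e" if "k mod s M = a"
      using h odo_of_int_in_odometer x0 level that by (metis dist_norm less_imp_le)
    then show "norm ((h (odo_of_int s (int k)) - h x0) * ind (odo_of_int s (int k)))
        \<le> e * (if k mod s M = a then of_nat (s M) else 0)"
      by (auto simp: ind_def level norm_mult intro: mult_right_mono)
  qed
  also have "\<dots> = e * real (s m)"
    using sum_indicator_mod_eq[OF scale_dvd[OF \<open>M \<le> m\<close>] a(1), where 'a=real]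
    by (simp flip: sum_distrib_left)
  finally show ?thesis
    using scale_pos[of m] unfolding ind_def[symmetric] diff
    by (simp add: level_avg_def norm_divide divide_le_eq)
qed

text \<open>The indicator of a level-M cylinder is a combination of characters, so its averages against h
  tend to 0, while by continuity they are close to the value of h on the cylinder.\<close>
lemma fourier_coeff_eq_zero_imp_eq_zero:
  assumes h: "continuous_on (odometer s) h"
    and zero: "\<And>z. z \<in> dual_odometer s \<Longrightarrow> fourier_coeff s h z = 0" and x0: "x0 \<in> odometer s"
  shows "h x0 = 0"
proof -
  have "norm (h x0) \<le> e" if "e > 0" for e
  proof -
    have "level_continuous h" using h by (simp add: continuous_on_iff_level_continuous)
    then obtain M where M: "\<forall>x\<in>odometer s. \<forall>y\<in>odometer s. x M = y M \<longrightarrow> dist (h x) (h y) < e"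
      using level_continuousD \<open>e > 0\<close> by blast
    obtain \<omega> :: complex where \<omega>: "\<And>t. \<omega> ^ t = 1 \<longleftrightarrow> s M dvd t"
      using exists_primitive_root_of_unity[OF scale_pos[of M]] by blast
    define a where "a = nat (x0 M)"
    have a: "a < s M" "x0 M = int a" using odometerD[OF x0, of M] by (auto simp: a_def)
    have dual: "\<omega> ^ j \<in> dual_odometer s" for j
      using \<omega>[of "j * s M"] by (auto simp: dual_odometer_def power_mult[symmetric])
    define C where "C m = level_avg m (\<lambda>x. h x * (if x M = x0 M then of_nat (s M) else 0))" for m
    have "(\<lambda>m. level_avg m (\<lambda>x. h x * odo_char s (\<omega> ^ j) x)) \<longlonglongrightarrow> 0" for j
      using level_avg_tendsto_fourier_coeff[OF h, of "cnj (\<omega> ^ j)"] zero[OF cnj_in_dual_odometer[OF dual]]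
      by simp
    then have "C \<longlonglongrightarrow> 0"
      unfolding C_def a(2) level_avg_cylinder_eq_sum_odo_char[OF \<omega> a(1)]
      by (intro tendsto_null_sum tendsto_mult_right_zero)
    then have "(\<lambda>m. norm (C m - h x0)) \<longlonglongrightarrow> norm (0 - h x0)"
      by (intro tendsto_intros)
    moreover have "\<forall>\<^sub>F m in sequentially. norm (C m - h x0) \<le> e"
      unfolding eventually_sequentially C_def using level_avg_cylinder_close[OF M x0] by blast
    ultimately have "norm (0 - h x0) \<le> e" by (rule tendsto_upperbound) simp
    then show ?thesis by simp
  qed
  then have "norm (h x0) \<le> 0" using field_le_epsilon[of "norm (h x0)" 0] by simp
  then show ?thesis by simp
qed

subsection \<open>Orders of characters\<close>

lemma root_order_pos_power:
  assumes "z \<in> dual_odometer s"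
  shows "0 < root_order z" "z ^ root_order z = 1"
proof -
  obtain m where "z ^ s m = 1" using assms by (auto simp: dual_odometer_def)
  then have "\<exists>n. 0 < n \<and> z ^ n = 1" using scale_pos[of m] by blast
  then show "0 < root_order z" "z ^ root_order z = 1"
    using LeastI_ex unfolding root_order_def by (metis (mono_tags, lifting))+
qed

lemma root_order_le_power_length:
  assumes "good_length s lam"
  obtains K P where "0 < K" "\<And>z. z \<in> dual_odometer s \<Longrightarrow> real (root_order z) \<le> K * lam z ^ P"
proof -
  obtain c \<alpha> where c: "0 < c" "0 < \<alpha>"
    and b: "\<And>z. z \<in> dual_odometer s \<Longrightarrow> c * real (root_order z) powr \<alpha> \<le> lam z"
    using assms unfolding good_length_def by blast
  have lam: "\<And>z. z \<in> dual_odometer s \<Longrightarrow> 1 \<le> lam z" using assms unfolding good_length_def by blast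
  define P where "P = nat \<lceil>1 / \<alpha>\<rceil>"
  define K where "K = (1 / c) powr (1 / \<alpha>)"
  have "real (root_order z) \<le> K * lam z ^ P" if z: "z \<in> dual_odometer s" for z
  proof -
    define n where "n = real (root_order z)"
    have "0 < n" unfolding n_def using root_order_pos_power[OF z] by simp
    have "n = (n powr \<alpha>) powr (1 / \<alpha>)" using c \<open>0 < n\<close> by (simp add: powr_powr)
    also have "\<dots> \<le> (lam z / c) powr (1 / \<alpha>)"
      using b[OF z] c \<open>0 < n\<close> by (intro powr_mono2) (auto simp: n_def field_simps)
    also have "\<dots> = K * lam z powr (1 / \<alpha>)"
      unfolding K_def using c lam[OF z] by (simp add: powr_divide powr_mult[symmetric] divide_inverse ac_simps)
    also have "\<dots> \<le> K * lam z powr (real P)"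
      using lam[OF z] unfolding P_def K_def by (intro mult_left_mono powr_mono) (auto, linarith)
    finally show ?thesis using lam[OF z] by (simp add: n_def powr_realpow)
  qed
  moreover have "0 < K" unfolding K_def using c by simp
  ultimately show ?thesis using that by blast
qed

lemma one_le_root_order_mult_norm_minus_one:
  assumes "z \<in> dual_odometer s" "z \<noteq> 1"
  shows "1 \<le> real (root_order z) * norm (z - 1)"
  using one_le_mult_norm_root_of_unity_minus_one root_order_pos_power assms by blast

end

subsection \<open>Rapid decay\<close>

locale rapid_decay_odometer = odometer_scale +
  fixes lam :: "complex \<Rightarrow> real"
  assumes good_length: "good_length s lam"
begin

lemma one_le_lam: "z \<in> dual_odometer s \<Longrightarrow> 1 \<le> lam z"
  using good_length by (simp add: good_length_def)

definition rapid_decay :: "(complex \<Rightarrow> complex) \<Rightarrow> bool" where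
  "rapid_decay c \<longleftrightarrow> (\<forall>N::nat. (\<lambda>z. norm (c z) * lam z ^ N) summable_on dual_odometer s)"

lemma C_RD_iff: "f \<in> C_RD s lam \<longleftrightarrow> continuous_on (odometer s) f \<and> rapid_decay (fourier_coeff s f)"
  by (simp add: C_RD_def rapid_decay_def)

lemma rapid_decay_abs_summable:
  assumes "rapid_decay c"
  shows "(\<lambda>z. norm (c z)) summable_on dual_odometer s"
  using assms[unfolded rapid_decay_def, rule_format, of 0] by simp

lemma rapid_decay_dominated:
  assumes d: "rapid_decay d"
    and le: "\<And>z. z \<in> dual_odometer s \<Longrightarrow> norm (c z) \<le> K * lam z ^ P * norm (d z)"
  shows "rapid_decay c"
  unfolding rapid_decay_def
proof
  fix N
  show "(\<lambda>z. norm (c z) * lam z ^ N) summable_on dual_odometer s"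
  proof (rule summable_on_comparison_test)
    show "(\<lambda>z. K * (norm (d z) * lam z ^ (P + N))) summable_on dual_odometer s"
      using d[unfolded rapid_decay_def, rule_format, of "P + N"] by (rule summable_on_cmult_right)
  next
    fix z assume z: "z \<in> dual_odometer s"
    have "0 \<le> lam z ^ N" using one_le_lam[OF z] by simp
    then show "0 \<le> norm (c z) * lam z ^ N" by simp
    have "norm (c z) * lam z ^ N \<le> K * lam z ^ P * norm (d z) * lam z ^ N"
      by (rule mult_right_mono[OF le[OF z] \<open>0 \<le> lam z ^ N\<close>])
    then show "norm (c z) * lam z ^ N \<le> K * (norm (d z) * lam z ^ (P + N))"
      by (simp add: power_add ac_simps)
  qed
qed

lemma coboundary_in_C_RD:
  assumes g: "g \<in> C_RD s lam"
  shows "(\<lambda>x. g (odo_phi s x) - g x) \<in> C_RD s lam"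
proof -
  have cont: "continuous_on (odometer s) g" and rd: "rapid_decay (fourier_coeff s g)"
    using g by (simp_all add: C_RD_iff)
  have "norm (fourier_coeff s (\<lambda>x. g (odo_phi s x) - g x) z) \<le> 2 * lam z ^ 0 * norm (fourier_coeff s g z)"
    if z: "z \<in> dual_odometer s" for z
  proof -
    have "norm (z - 1) \<le> 2"
      using norm_triangle_ineq4[of z 1] norm_dual_odometer[OF z] by simp
    then show ?thesis
      by (simp add: fourier_coeff_coboundary[OF cont z] norm_mult mult_right_mono)
  qed
  then have "rapid_decay (fourier_coeff s (\<lambda>x. g (odo_phi s x) - g x))"
    by (rule rapid_decay_dominated[OF rd])
  then show ?thesis
    by (simp add: C_RD_iff continuous_on_diff continuous_on_comp_odo_phi cont)
qed

lemma const_in_C_RD: "(\<lambda>x. c) \<in> C_RD s lam"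
proof -
  have "finite {z \<in> dual_odometer s. norm (fourier_coeff s (\<lambda>x. c) z) * lam z ^ N \<noteq> 0}" for N
    by (rule finite_subset[of _ "{1}"]) (auto simp: fourier_coeff_const split: if_splits)
  then have "rapid_decay (fourier_coeff s (\<lambda>x. c))"
    unfolding rapid_decay_def by (blast intro: finite_nonzero_values_imp_summable_on)
  then show ?thesis by (simp add: C_RD_iff)
qed

lemma fourier_series_in_C_RD:
  assumes c: "rapid_decay c"
  shows "fourier_series c \<in> C_RD s lam"
proof -
  have "norm (fourier_coeff s (fourier_series c) z) \<le> 1 * lam z ^ 0 * norm (c z)" if "z \<in> dual_odometer s" for z
    using fourier_coeff_fourier_series[OF rapid_decay_abs_summable[OF c] that] by simp
  then have "rapid_decay (fourier_coeff s (fourier_series c))"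
    by (rule rapid_decay_dominated[OF c])
  then show ?thesis
    using continuous_on_fourier_series[OF rapid_decay_abs_summable[OF c]] by (simp add: C_RD_iff)
qed

lemma rapid_decay_divided_fourier_coeff:
  assumes f: "rapid_decay (fourier_coeff s f)"
  shows "rapid_decay (\<lambda>z. if z = 1 then 0 else fourier_coeff s f z / (z - 1))"
proof -
  obtain K P where K: "0 < K" "\<And>z. z \<in> dual_odometer s \<Longrightarrow> real (root_order z) \<le> K * lam z ^ P"
    using root_order_le_power_length[OF good_length] by blast
  have "norm (if z = 1 then 0 else fourier_coeff s f z / (z - 1)) \<le> K * lam z ^ P * norm (fourier_coeff s f z)"
    if z: "z \<in> dual_odometer s" for z
  proof (cases "z = 1")
    case False
    have "1 \<le> real (root_order z) * norm (z - 1)"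
      by (rule one_le_root_order_mult_norm_minus_one[OF z False])
    also have "\<dots> \<le> K * lam z ^ P * norm (z - 1)"
      by (rule mult_right_mono[OF K(2)[OF z]]) simp
    finally have "1 / norm (z - 1) \<le> K * lam z ^ P"
      using False by (simp add: divide_le_eq)
    then have "norm (fourier_coeff s f z) * (1 / norm (z - 1)) \<le> norm (fourier_coeff s f z) * (K * lam z ^ P)"
      by (rule mult_left_mono) simp
    then show ?thesis
      using False by (simp add: norm_divide mult.commute)
  qed (use K(1) one_le_lam[OF z] in simp)
  then show ?thesis by (rule rapid_decay_dominated[OF f])
qed

lemma haar_integral_image_C_RD: "haar_integral s ` C_RD s lam = UNIV"
  using const_in_C_RD haar_integral_const by (metis UNIV_eq_I image_eqI)

lemma B1_RD_imp_haar_integral_eq_0: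
  assumes "f \<in> B1_RD s lam"
  shows "haar_integral s f = 0"
proof -
  obtain g where g: "g \<in> C_RD s lam" "\<And>x. x \<in> odometer s \<Longrightarrow> f x = g (odo_phi s x) - g x"
    using assms unfolding B1_RD_def by blast
  then show ?thesis
    using haar_integral_cong[OF g(2)] haar_integral_coboundary by (simp add: C_RD_iff)
qed

lemma haar_integral_eq_0_imp_coboundary:
  assumes f: "f \<in> C_RD s lam" and f0: "haar_integral s f = 0"
  shows "f \<in> B1_RD s lam"
proof -
  have cont_f: "continuous_on (odometer s) f" and rd_f: "rapid_decay (fourier_coeff s f)"
    using f by (simp_all add: C_RD_iff)
  define c where "c z = (if z = 1 then 0 else fourier_coeff s f z / (z - 1))" for z
  have c: "rapid_decay c"
    unfolding c_def by (rule rapid_decay_divided_fourier_coeff[OF rd_f])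
  define g where "g = fourier_series c"
  have g: "g \<in> C_RD s lam" unfolding g_def by (rule fourier_series_in_C_RD[OF c])
  then have cont_g: "continuous_on (odometer s) g" by (simp add: C_RD_iff)
  have cont_cob: "continuous_on (odometer s) (\<lambda>x. g (odo_phi s x) - g x)"
    by (intro continuous_on_diff continuous_on_comp_odo_phi cont_g)
  have "fourier_coeff s (\<lambda>x. (g (odo_phi s x) - g x) - f x) z = 0" if z: "z \<in> dual_odometer s" for z
  proof -
    have "fourier_coeff s (\<lambda>x. (g (odo_phi s x) - g x) - f x) z = (z - 1) * c z - fourier_coeff s f z"
      using fourier_coeff_diff[OF cont_cob cont_f] fourier_coeff_coboundary[OF cont_g z]
        fourier_coeff_fourier_series[OF rapid_decay_abs_summable[OF c] z]
      by (simp add: g_def)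
    then show ?thesis
      using f0 by (auto simp: c_def fourier_coeff_one)
  qed
  then have "g (odo_phi s x) - g x - f x = 0" if "x \<in> odometer s" for x
    using fourier_coeff_eq_zero_imp_eq_zero[OF continuous_on_diff[OF cont_cob cont_f] _ that] by blast
  then show ?thesis using g unfolding B1_RD_def by force
qed

end

theorem mainTheorem10:
  fixes s :: "nat \<Rightarrow> nat" and lam :: "complex \<Rightarrow> real"
  assumes "is_scale s" and "infinite_lcm s" and "good_length s lam"
  shows "(\<forall>g\<in>C_RD s lam. (\<lambda>x. g (odo_phi s x) - g x) \<in> C_RD s lam)
     \<and> (\<forall>f\<in>C_RD s lam. \<forall>g\<in>C_RD s lam. \<forall>c::complex.
          haar_integral s (\<lambda>x. f x + c * g x) = haar_integral s f + c * haar_integral s g)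
     \<and> haar_integral s ` C_RD s lam = UNIV
     \<and> (\<forall>f\<in>C_RD s lam. haar_integral s f = 0 \<longleftrightarrow> f \<in> B1_RD s lam)"
proof -
  interpret rapid_decay_odometer s lam
    using assms(1,3) by unfold_locales
  show ?thesis
    using coboundary_in_C_RD haar_integral_add_cmult haar_integral_image_C_RD
      B1_RD_imp_haar_integral_eq_0 haar_integral_eq_0_imp_coboundary
    by (auto simp: C_RD_iff)
qed

end
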